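(* For $A,x\in\mathbb{R}$ define $E_0(A,x):=1$, $E_1(A,x):=e^{(1-x)A}$ and, for $n\ge2$, \[ E_n(A,x):=\begin{cases} \exp\!\Big(\big[x(E_1+E_3+\cdots+E_{n-1})-\tfrac n2\big]A\Big), & n \text{ even},\\[4pt] \exp\!\Big(\big[\tfrac{n+1}{2}-x(E_0+E_2+\cdots+E_{n-1})\big]A\Big), & n\text{ odd},\end{cases} \] with all $E_j$ evaluated at $(A,x)$. Define $\varphi_1(A,x):=x-1$, $\varphi_n(A,x):=\varphi_{n-1}(A,x)-1+xE_{n-1}(A,x)$ for $n\ge2$, and the polynomial $p_n(A):=\frac{\partial\varphi_n}{\partial x}(A,1)$. Then $p_2\mid p_{2n}$ for all $n\ge1$. In particular, since $p_2(A)=2-A$, $A=2$ is a root of $p_{2n}$ for every $n\ge1$. *)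

theory Defs
  imports "HOL-Analysis.Analysis" "HOL-Computational_Algebra.Polynomial"
begin

function E :: "nat \<Rightarrow> real \<Rightarrow> real \<Rightarrow> real" where
  "E n A x =
     (if n = 0 then 1
      else if n = 1 then exp ((1 - x) * A)
      else if even n then
        exp ((x * (\<Sum>j\<in>{j. j < n \<and> odd j}. E j A x) - real n / 2) * A)
      else
        exp (((real n + 1) / 2 - x * (\<Sum>j\<in>{j. j < n \<and> even j}. E j A x)) * A))"
  by auto
termination
  by (relation "Wellfounded.measure (\<lambda>(n, A, x). n)") auto

declare E.simps [simp del]

text \<open>phi n A x for n \<ge> 1 (phi 0 is left unspecified and never used).\<close>
fun phi :: "nat \<Rightarrow> real \<Rightarrow> real \<Rightarrow> real" where
  "phi (Suc 0) A x = x - 1"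
| "phi (Suc (Suc n)) A x = phi (Suc n) A x - 1 + x * E (Suc n) A x"

definition p :: "nat \<Rightarrow> real \<Rightarrow> real" where
  "p n A = deriv (\<lambda>x. phi n A x) 1"

end

theory Submission
  imports Defs
begin

(* Since E_n(A,1) = 1 for every n, the derivative at x = 1 of x E_n(A,x) is a polynomial
   u_n(A), and p_n = u_0 + ... + u_(n-1). Both cases of the definition of E_n are instances of
   one formula, a sum over the indices below n of the opposite parity; comparing the instances
   for n and n + 2 gives the recurrence u_(n+2) = u_n + (-1)^n A u_(n+1). At A = 2 it yields
   u_(2k+1)(2) = -u_(2k)(2), so p_(2n)(2) = 0, and hence p_2 = 2 - A divides p_(2n). *)

definition opp_parity_below :: "nat \<Rightarrow> nat set" where
  "opp_parity_below n = {j. j < n \<and> even j \<noteq> even n}"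

lemma finite_opp_parity_below [simp]: "finite (opp_parity_below n)"
  by (simp add: opp_parity_below_def)

lemma opp_parity_below_Suc_Suc:
  "opp_parity_below (Suc (Suc n)) = insert (Suc n) (opp_parity_below n)"
  by (auto simp: opp_parity_below_def less_Suc_eq)

lemma card_opp_parity_below: "card (opp_parity_below n) = (n + 1) div 2"
proof (induction n rule: nat_induct2)
  case 1
  have "opp_parity_below 1 = {0}" by (auto simp: opp_parity_below_def)
  then show ?case by simp
next
  case (step n)
  have "Suc n \<notin> opp_parity_below n" by (simp add: opp_parity_below_def)
  then show ?case using step by (simp add: opp_parity_below_Suc_Suc)
qed (simp add: opp_parity_below_def)

lemma E_0 [simp]: "E 0 A x = 1"
  by (simp add: E.simps)

lemma E_eq_opp_parity_below:
  "E n A x = exp ((-1) ^ n * A *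
     (x * (\<Sum>j\<in>opp_parity_below n. E j A x) - card (opp_parity_below n)))"
proof -
  consider "n = 0" | "n = 1" | "n \<ge> 2" "even n" | "n \<ge> 2" "odd n" by linarith
  then show ?thesis
  proof cases
    case 1
    then show ?thesis by (simp add: opp_parity_below_def)
  next
    case 2
    have "opp_parity_below 1 = {0}" by (auto simp: opp_parity_below_def)
    with 2 show ?thesis by (simp add: E.simps[of "Suc 0"] algebra_simps)
  next
    case 3
    then have "opp_parity_below n = {j. j < n \<and> odd j}"
      by (auto simp: opp_parity_below_def)
    moreover have "real (card (opp_parity_below n)) = real n / 2"
      using 3 by (simp add: card_opp_parity_below real_of_nat_div)
    ultimately show ?thesis using 3 by (simp add: E.simps[of n])
  next
    case 4
    then have "opp_parity_below n = {j. j < n \<and> even j}"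
      by (auto simp: opp_parity_below_def)
    moreover have "real (card (opp_parity_below n)) = (real n + 1) / 2"
      using 4 by (auto simp: card_opp_parity_below elim!: oddE)
    ultimately show ?thesis using 4 by (simp add: E.simps[of n] algebra_simps)
  qed
qed

lemma E_at_1 [simp]: "E n A 1 = 1"
proof (induction n rule: less_induct)
  case (less n)
  have "(\<Sum>j\<in>opp_parity_below n. E j A 1) = card (opp_parity_below n)"
    using less by (simp add: opp_parity_below_def)
  then show ?case by (subst E_eq_opp_parity_below) simp
qed

(* Evaluated at A, this is the derivative of x \<mapsto> x * E n A x at x = 1. *)
fun xE_deriv_poly :: "nat \<Rightarrow> real poly" where
  "xE_deriv_poly 0 = 1"
| "xE_deriv_poly (Suc 0) = [:1, -1:]"
| "xE_deriv_poly (Suc (Suc n)) = xE_deriv_poly n + (-1) ^ n * [:0, 1:] * xE_deriv_poly (Suc n)"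

lemma xE_deriv_poly_eq_opp_parity_below:
  "xE_deriv_poly n = 1 + (-1) ^ n * [:0, 1:] * (\<Sum>j\<in>opp_parity_below n. xE_deriv_poly j)"
proof (induction n rule: nat_induct2)
  case 1
  have "opp_parity_below 1 = {0}" by (auto simp: opp_parity_below_def)
  then show ?case by (simp add: one_pCons)
next
  case (step n)
  have "Suc n \<notin> opp_parity_below n" by (simp add: opp_parity_below_def)
  then have sum_eq: "(\<Sum>j\<in>opp_parity_below (n + 2). xE_deriv_poly j) =
      (\<Sum>j\<in>opp_parity_below n. xE_deriv_poly j) + xE_deriv_poly (Suc n)"
    by (simp add: opp_parity_below_Suc_Suc)
  have "xE_deriv_poly (n + 2) = xE_deriv_poly n + (-1) ^ n * [:0, 1:] * xE_deriv_poly (Suc n)"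
    by simp
  then show ?case
    by (simp only: sum_eq step) (simp add: algebra_simps)
qed (simp add: opp_parity_below_def)

lemma E_has_real_derivative_at_1:
  "((\<lambda>x. E n A x) has_real_derivative poly (xE_deriv_poly n) A - 1) (at 1)"
proof (induction n rule: less_induct)
  case (less n)
  define S where "S = opp_parity_below n"
  have "\<And>j. j \<in> S \<Longrightarrow> ((\<lambda>x. E j A x) has_real_derivative poly (xE_deriv_poly j) A - 1) (at 1)"
    using less by (simp add: S_def opp_parity_below_def)
  then have "((\<lambda>x. \<Sum>j\<in>S. E j A x) has_real_derivative (\<Sum>j\<in>S. poly (xE_deriv_poly j) A - 1)) (at 1)"
    by (rule DERIV_sum)
  then have "((\<lambda>x. x * (\<Sum>j\<in>S. E j A x)) has_real_derivative (\<Sum>j\<in>S. poly (xE_deriv_poly j) A)) (at 1)"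
    using DERIV_mult[OF DERIV_ident] by (fastforce simp: sum_subtractf S_def)
  then have "((\<lambda>x. (-1) ^ n * A * (x * (\<Sum>j\<in>S. E j A x) - card S)) has_real_derivative
      (-1) ^ n * A * ((\<Sum>j\<in>S. poly (xE_deriv_poly j) A) - 0)) (at 1)"
    by (intro DERIV_cmult DERIV_diff DERIV_const)
  then have "((\<lambda>x. exp ((-1) ^ n * A * (x * (\<Sum>j\<in>S. E j A x) - card S))) has_real_derivative
      (-1) ^ n * A * (\<Sum>j\<in>S. poly (xE_deriv_poly j) A)) (at 1)"
    by (rule DERIV_fun_exp[THEN DERIV_cong]) simp
  moreover have "E n A = (\<lambda>x. exp ((-1) ^ n * A * (x * (\<Sum>j\<in>S. E j A x) - card S)))"
    unfolding S_def by (rule ext, rule E_eq_opp_parity_below)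
  moreover have "poly (xE_deriv_poly n) A - 1 = (-1) ^ n * A * (\<Sum>j\<in>S. poly (xE_deriv_poly j) A)"
    unfolding S_def by (subst xE_deriv_poly_eq_opp_parity_below) (simp add: poly_sum)
  ultimately show ?case by simp
qed

definition p_poly :: "nat \<Rightarrow> real poly" where
  "p_poly n = (\<Sum>j<n. xE_deriv_poly j)"

lemma phi_has_real_derivative_at_1:
  "((\<lambda>x. phi (Suc m) A x) has_real_derivative poly (p_poly (Suc m)) A) (at 1)"
proof (induction m)
  case 0
  show ?case by (auto intro!: derivative_eq_intros simp: p_poly_def)
next
  case (Suc m)
  have "((\<lambda>x. x * E (Suc m) A x) has_real_derivative poly (xE_deriv_poly (Suc m)) A) (at 1)"
    using DERIV_mult[OF DERIV_ident E_has_real_derivative_at_1] by simp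
  from DERIV_add[OF DERIV_diff[OF Suc DERIV_const] this]
  show ?case by (simp add: p_poly_def poly_sum)
qed

lemma p_eq_poly_p_poly: "n \<ge> 1 \<Longrightarrow> p n A = poly (p_poly n) A"
  using phi_has_real_derivative_at_1[of "n - 1" A] unfolding p_def
  by (intro DERIV_imp_deriv) simp

lemma p_poly_2: "p_poly 2 = [:2, -1:]"
  by (simp add: p_poly_def numeral_2_eq_2 one_pCons)

lemma poly_xE_deriv_poly_odd_at_2:
  "poly (xE_deriv_poly (Suc (2 * k))) 2 = - poly (xE_deriv_poly (2 * k)) 2"
proof (induction k)
  case (Suc k)
  have "2 * Suc k = Suc (Suc (2 * k))" by simp
  with Suc show ?case by simp
qed simp

lemma poly_p_poly_even_at_2: "poly (p_poly (2 * n)) 2 = 0"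
proof (induction n)
  case (Suc n)
  have "{..<2 * Suc n} = insert (Suc (2 * n)) (insert (2 * n) {..<2 * n})" by auto
  with Suc show ?case by (simp add: p_poly_def poly_sum poly_xE_deriv_poly_odd_at_2)
qed (simp add: p_poly_def)

theorem lemma4p7:
  fixes n :: nat
  assumes "n \<ge> 1"
  shows "(\<exists>P Q q :: real poly.
            (\<forall>A. p 2 A = poly P A) \<and> (\<forall>A. p (2 * n) A = poly Q A) \<and> Q = P * q)
         \<and> p (2 * n) 2 = 0"
proof
  obtain r where "p_poly (2 * n) = [:- 2, 1:] * r"
    using poly_p_poly_even_at_2 poly_eq_0_iff_dvd by (metis dvdE)
  then have "p_poly (2 * n) = p_poly 2 * - r"
    by (simp add: p_poly_2)
  moreover have "\<forall>A. p 2 A = poly (p_poly 2) A" "\<forall>A. p (2 * n) A = poly (p_poly (2 * n)) A"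
    using assms by (simp_all add: p_eq_poly_p_poly)
  ultimately show "\<exists>P Q q :: real poly.
      (\<forall>A. p 2 A = poly P A) \<and> (\<forall>A. p (2 * n) A = poly Q A) \<and> Q = P * q"
    by blast
  show "p (2 * n) 2 = 0"
    using assms by (simp add: p_eq_poly_p_poly poly_p_poly_even_at_2)
qed

end
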